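(* Let $n\ge 3$, and let $\Omega_n$, the perimeter $p:\Omega_n\to\mathbb{R}$, the area $\mathcal A:\Omega_n\to\mathbb{R}$ and $\Psi=(p,\mathcal A):\Omega_n\to\mathbb{R}^2$ be as in the context. Then: (1) $p$ and $\mathcal A$ are submersions on $\Omega_n$; hence the level sets of $p$ (resp. of $\mathcal A$) are the leaves of a codimension $1$ foliation $\mathcal F_p$ (resp. $\mathcal F_a$) on $\Omega_n$. (2) For $\omega\in\Omega_n$, the differential $d\Psi(\omega)$ has rank $2$ if the polygon associated with $\omega$ is not regular, and rank $1$ if it is regular. Consequently $\Psi$ defines a codimension $2$ foliation $\mathcal F$ on the open subset of $\Omega_n$ consisting of the $\omega$ whose associated polygon is not regular, whose leaves are the level sets of $\Psi$ there.
   Context: Let $\mathcal V=\{(x,y,z)\in\mathbb{R}^3: 0<x<y+z,\ 0<y<x+z,\ 0<z<x+y\}$. For $(t,x,s)\in\mathcal V$ let $\alpha(t,x,s)=\arccos\frac{t^2+s^2-x^2}{2ts}\in\,]0,\pi[$ (the angle opposite the side $x$ in a triangle with sides $t,x,s$). Let $$\Omega_n=\Big\{\omega=(t_1,x_1,t_2,x_2,\dots,t_{n-2},x_{n-2},t_{n-1})\in(\mathbb{R}_{>0})^{2n-3}:\ (t_k,x_k,t_{k+1})\in\mathcal V \ (1\le k\le n-2),\ \sum_{k=1}^{n-2}\alpha(t_k,x_k,t_{k+1})<2\pi\Big\}.$$ To $\omega$ associate the planar polygon $(M_1,\dots,M_n)$ with $M_n=O$, $M_k=t_k(\cos\theta_k,\sin\theta_k)$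 ($1\le k\le n-1$), $\theta_1=0$, $\theta_{k+1}=\theta_k+\alpha(t_k,x_k,t_{k+1})$; so $t_k=M_nM_k$, $x_k=M_kM_{k+1}$, the side lengths are $t_1,x_1,\dots,x_{n-2},t_{n-1}$ (the polygon is star-shaped with respect to $M_n$). Perimeter: $p(\omega)=t_1+x_1+x_2+\dots+x_{n-2}+t_{n-1}$. Area: $\mathcal A(\omega)=\sum_{k=1}^{n-2}\frac14\sqrt{f(t_k,x_k,t_{k+1})}$ with $f(x,y,z)=(x+y+z)(-x+y+z)(x-y+z)(x+y-z)$ (Heron's formula for the triangles $M_nM_kM_{k+1}$). A polygon is equilateral if all its sides have the same length, inscribable if all its vertices lie on a common circle, and regular if it is both. *)

theory Defs
  imports "HOL-Analysis.Analysis"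
begin

text \<open>Points of \<Omega>_n live in real^'d, where the coordinates of R^(2n-3) are
  identified with the index type 'd via a bijection idx from {..<2n-3}.
  Coordinate 2k-2 is t_k (k = 1..n-1) and coordinate 2k-1 is x_k (k = 1..n-2).\<close>

definition inV :: "real \<Rightarrow> real \<Rightarrow> real \<Rightarrow> bool" where
  "inV x y z \<longleftrightarrow> 0 < x \<and> x < y + z \<and> 0 < y \<and> y < x + z \<and> 0 < z \<and> z < x + y"

definition alpha :: "real \<Rightarrow> real \<Rightarrow> real \<Rightarrow> real" where
  "alpha t x s = arccos ((t^2 + s^2 - x^2) / (2 * t * s))"

definition heron :: "real \<Rightarrow> real \<Rightarrow> real \<Rightarrow> real" where
  "heron x y z = (x + y + z) * (- x + y + z) * (x - y + z) * (x + y - z)"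

definition tc :: "(nat \<Rightarrow> 'd) \<Rightarrow> real^'d \<Rightarrow> nat \<Rightarrow> real" where
  "tc idx \<omega> k = \<omega> $ idx (2 * k - 2)"

definition xc :: "(nat \<Rightarrow> 'd) \<Rightarrow> real^'d \<Rightarrow> nat \<Rightarrow> real" where
  "xc idx \<omega> k = \<omega> $ idx (2 * k - 1)"

definition Omega :: "nat \<Rightarrow> (nat \<Rightarrow> 'd::finite) \<Rightarrow> (real^'d) set" where
  "Omega n idx = {\<omega>. (\<forall>i. 0 < \<omega> $ i)
      \<and> (\<forall>k\<in>{1..n-2}. inV (tc idx \<omega> k) (xc idx \<omega> k) (tc idx \<omega> (k+1)))
      \<and> (\<Sum>k=1..n-2. alpha (tc idx \<omega> k) (xc idx \<omega> k) (tc idx \<omega> (k+1))) < 2 * pi}"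

definition perim :: "nat \<Rightarrow> (nat \<Rightarrow> 'd::finite) \<Rightarrow> real^'d \<Rightarrow> real" where
  "perim n idx \<omega> = tc idx \<omega> 1 + (\<Sum>k=1..n-2. xc idx \<omega> k) + tc idx \<omega> (n-1)"

definition area :: "nat \<Rightarrow> (nat \<Rightarrow> 'd::finite) \<Rightarrow> real^'d \<Rightarrow> real" where
  "area n idx \<omega> = (\<Sum>k=1..n-2. sqrt (heron (tc idx \<omega> k) (xc idx \<omega> k) (tc idx \<omega> (k+1))) / 4)"

definition Psi :: "nat \<Rightarrow> (nat \<Rightarrow> 'd::finite) \<Rightarrow> real^'d \<Rightarrow> real \<times> real" where
  "Psi n idx \<omega> = (perim n idx \<omega>, area n idx \<omega>)"

definition theta :: "(nat \<Rightarrow> 'd) \<Rightarrow> real^'d \<Rightarrow> nat \<Rightarrow> real" where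
  "theta idx \<omega> k = (\<Sum>j=1..<k. alpha (tc idx \<omega> j) (xc idx \<omega> j) (tc idx \<omega> (j+1)))"

definition vert :: "nat \<Rightarrow> (nat \<Rightarrow> 'd) \<Rightarrow> real^'d \<Rightarrow> nat \<Rightarrow> complex" where
  "vert n idx \<omega> k = (if k = n then 0 else complex_of_real (tc idx \<omega> k) * cis (theta idx \<omega> k))"

definition equilateral :: "nat \<Rightarrow> (nat \<Rightarrow> 'd) \<Rightarrow> real^'d \<Rightarrow> bool" where
  "equilateral n idx \<omega> \<longleftrightarrow> (\<forall>k\<in>{1..n}. \<forall>l\<in>{1..n}.
      dist (vert n idx \<omega> k) (vert n idx \<omega> (k mod n + 1))
    = dist (vert n idx \<omega> l) (vert n idx \<omega> (l mod n + 1)))"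

definition inscribable :: "nat \<Rightarrow> (nat \<Rightarrow> 'd) \<Rightarrow> real^'d \<Rightarrow> bool" where
  "inscribable n idx \<omega> \<longleftrightarrow> (\<exists>c r. \<forall>k\<in>{1..n}. dist (vert n idx \<omega> k) c = r)"

definition regular :: "nat \<Rightarrow> (nat \<Rightarrow> 'd) \<Rightarrow> real^'d \<Rightarrow> bool" where
  "regular n idx \<omega> \<longleftrightarrow> equilateral n idx \<omega> \<and> inscribable n idx \<omega>"

definition submersion_on :: "('a::real_normed_vector \<Rightarrow> 'b::real_normed_vector) \<Rightarrow> 'a set \<Rightarrow> bool" where
  "submersion_on f S \<longleftrightarrow> (\<forall>x\<in>S. \<exists>D. (f has_derivative D) (at x) \<and> surj D)"

end

theory Submission
  imports Defs
begin

text \<open>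
  The perimeter is a linear form, and the area is the sum of the Heron areas of the triangles
  \<open>M\<^sub>n M\<^sub>k M\<^sub>k\<^sub>+\<^sub>1\<close>; it is homogeneous of degree 2, so \<open>dA(\<omega>) \<omega> = 2 A(\<omega>) > 0\<close> and both
  differentials are onto. The differential of \<open>\<Psi> = (p, A)\<close> has rank 1 exactly when
  \<open>dA = l dp\<close> for some \<open>l\<close>. Read coordinatewise, this says that the partial derivatives of
  consecutive triangle areas along each interior radius \<open>t\<^sub>k\<close> cancel and that all other partial
  derivatives equal \<open>l\<close>. In polar coordinates about \<open>M\<^sub>n\<close> these conditions carry the vertices,
  one triangle at a time, onto the circle through \<open>M\<^sub>n\<close> with centre \<open>(t\<^sub>1/2, l)\<close>, and then force
  every side to have length \<open>t\<^sub>1\<close>. Conversely, the sides of a regular polygon subtend equal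
  inscribed angles, which gives the conditions back with \<open>l\<close> the ordinate of the centre.
  Finally, regularity is the vanishing of a continuous function on the open set \<open>\<Omega>\<^sub>n\<close>.
\<close>

section \<open>Triangles\<close>

lemma heron_eq: "heron t x s = 4 * t^2 * s^2 - (t^2 + s^2 - x^2)^2"
  unfolding heron_def by (simp add: algebra_simps power2_eq_square)

lemma heron_pos: "inV t x s \<Longrightarrow> 0 < heron t x s"
  unfolding inV_def heron_def by simp

lemma cos_law_ratio_bounds:
  assumes "inV t x s"
  shows "\<bar>(t^2 + s^2 - x^2) / (2 * t * s)\<bar> < 1"
proof -
  have "t > 0" "s > 0" using assms unfolding inV_def by auto
  then have "1 - ((t^2 + s^2 - x^2) / (2 * t * s))^2 = heron t x s / (4 * t^2 * s^2)"
    unfolding heron_eq by (simp add: field_simps power2_eq_square)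
  also have "\<dots> > 0" using heron_pos[OF assms] \<open>t > 0\<close> \<open>s > 0\<close> by simp
  finally show ?thesis by (simp add: abs_square_less_1)
qed

lemma cos_alpha: "inV t x s \<Longrightarrow> cos (alpha t x s) = (t^2 + s^2 - x^2) / (2 * t * s)"
  unfolding alpha_def by (rule cos_arccos_abs, rule less_imp_le, rule cos_law_ratio_bounds)

lemma sin_alpha:
  assumes "inV t x s"
  shows "sin (alpha t x s) = sqrt (heron t x s) / (2 * t * s)"
proof -
  have "t > 0" "s > 0" using assms unfolding inV_def by auto
  have "sin (alpha t x s) = sqrt (1 - ((t^2 + s^2 - x^2) / (2 * t * s))^2)"
    using cos_law_ratio_bounds[OF assms] unfolding alpha_def by (simp add: sin_arccos_abs)
  also have "1 - ((t^2 + s^2 - x^2) / (2 * t * s))^2 = heron t x s / (2 * t * s)^2"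
    using \<open>t > 0\<close> \<open>s > 0\<close> unfolding heron_eq by (simp add: field_simps power2_eq_square)
  finally show ?thesis using \<open>t > 0\<close> \<open>s > 0\<close> by (simp add: real_sqrt_divide)
qed

lemma alpha_bounds:
  assumes "inV t x s"
  shows "0 < alpha t x s \<and> alpha t x s < pi"
  using cos_law_ratio_bounds[OF assms] unfolding alpha_def abs_less_iff
  by (intro arccos_lt_bounded) linarith+

lemma sin_alpha_pos: "inV t x s \<Longrightarrow> 0 < sin (alpha t x s)"
  using alpha_bounds by (simp add: sin_gt_zero)

lemma law_of_cosines: "inV t x s \<Longrightarrow> x^2 = t^2 + s^2 - 2 * t * s * cos (alpha t x s)"
  by (simp add: cos_alpha inV_def field_simps)

text \<open>Partial derivatives of the triangle area \<open>sqrt (heron t x s) / 4\<close> in its three sides.\<close>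
definition dA_dt :: "real \<Rightarrow> real \<Rightarrow> real \<Rightarrow> real" where
  "dA_dt t x s = t * (x^2 + s^2 - t^2) / (2 * sqrt (heron t x s))"

definition dA_dx :: "real \<Rightarrow> real \<Rightarrow> real \<Rightarrow> real" where
  "dA_dx t x s = x * (t^2 + s^2 - x^2) / (2 * sqrt (heron t x s))"

definition dA_ds :: "real \<Rightarrow> real \<Rightarrow> real \<Rightarrow> real" where
  "dA_ds t x s = s * (t^2 + x^2 - s^2) / (2 * sqrt (heron t x s))"

lemma dA_dt_polar:
  assumes "inV t x s"
  shows "dA_dt t x s = (s - t * cos (alpha t x s)) / (2 * sin (alpha t x s))"
  using heron_pos[OF assms] assms unfolding dA_dt_def cos_alpha[OF assms] sin_alpha[OF assms] inV_def
  by (simp add: field_simps power2_eq_square)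

lemma dA_dx_polar:
  assumes "inV t x s"
  shows "dA_dx t x s = x * cos (alpha t x s) / (2 * sin (alpha t x s))"
  using heron_pos[OF assms] assms unfolding dA_dx_def cos_alpha[OF assms] sin_alpha[OF assms] inV_def
  by (simp add: field_simps power2_eq_square)

lemma dA_ds_polar:
  assumes "inV t x s"
  shows "dA_ds t x s = (t - s * cos (alpha t x s)) / (2 * sin (alpha t x s))"
  using heron_pos[OF assms] assms unfolding dA_ds_def cos_alpha[OF assms] sin_alpha[OF assms] inV_def
  by (simp add: field_simps power2_eq_square)

lemma dA_euler:
  assumes "0 < heron t x s"
  shows "dA_dt t x s * t + dA_dx t x s * x + dA_ds t x s * s = sqrt (heron t x s) / 2"
proof -
  define r where "r = sqrt (heron t x s)"
  have "r > 0" "r * r = heron t x s" unfolding r_def using assms by simp_all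
  have "dA_dt t x s * t + dA_dx t x s * x + dA_ds t x s * s
      = (t^2 * (x^2 + s^2 - t^2) + x^2 * (t^2 + s^2 - x^2) + s^2 * (t^2 + x^2 - s^2)) / (2 * r)"
    unfolding dA_dt_def dA_dx_def dA_ds_def r_def[symmetric]
    by (simp add: add_divide_distrib power2_eq_square mult_ac)
  also have "t^2 * (x^2 + s^2 - t^2) + x^2 * (t^2 + s^2 - x^2) + s^2 * (t^2 + x^2 - s^2) = r * r"
    unfolding \<open>r * r = heron t x s\<close> heron_def by (simp add: power2_eq_square algebra_simps)
  also have "r * r / (2 * r) = r / 2" using \<open>r > 0\<close> by simp
  finally show ?thesis by (simp only: r_def)
qed

lemma angles_eq_if_sines_eq:
  fixes \<delta> :: "nat \<Rightarrow> real"
  assumes M: "2 \<le> M" and bounds: "\<And>i. i \<le> M \<Longrightarrow> 0 < \<delta> i \<and> \<delta> i < pi"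
    and sum: "(\<Sum>i\<le>M. \<delta> i) = pi" and sines: "\<And>i. i \<le> M \<Longrightarrow> sin (\<delta> i) = sin (\<delta> 0)"
    and i: "i \<le> M"
  shows "\<delta> i = \<delta> 0"
proof -
  have acute: "\<delta> i < pi/2" if "i \<le> M" for i
  proof (rule ccontr)
    assume "\<not> \<delta> i < pi/2"
    define j :: nat where "j = (if i = 0 then 1 else 0)"
    define l :: nat where "l = (if i \<le> 1 then 2 else 1)"
    have jl: "j \<le> M" "l \<le> M" "i \<noteq> j" "i \<noteq> l" "j \<noteq> l"
      using M unfolding j_def l_def by auto
    have "pi \<le> \<delta> i + \<delta> j"
    proof (cases "pi/2 \<le> \<delta> j")
      case False
      have "sin (pi - \<delta> i) = sin (\<delta> j)"
        using sines[OF \<open>i \<le> M\<close>] sines[OF \<open>j \<le> M\<close>] by simp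
      then have "arcsin (sin (pi - \<delta> i)) = arcsin (sin (\<delta> j))" by simp
      moreover have "arcsin (sin (pi - \<delta> i)) = pi - \<delta> i"
        using \<open>\<not> \<delta> i < pi/2\<close> bounds[OF \<open>i \<le> M\<close>] by (intro arcsin_sin) auto
      moreover have "arcsin (sin (\<delta> j)) = \<delta> j"
        using False bounds[OF \<open>j \<le> M\<close>] by (intro arcsin_sin) auto
      ultimately show ?thesis by simp
    qed (use \<open>\<not> \<delta> i < pi/2\<close> in simp)
    moreover have "(\<Sum>a\<in>{i, j, l}. \<delta> a) \<le> (\<Sum>a\<le>M. \<delta> a)"
      by (rule sum_mono2) (use jl \<open>i \<le> M\<close> bounds in \<open>auto intro: less_imp_le\<close>)
    ultimately show False using sum bounds[OF \<open>l \<le> M\<close>] jl by simp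
  qed
  have "arcsin (sin (\<delta> i)) = \<delta> i"
    using acute[OF i] bounds[OF i] by (intro arcsin_sin) auto
  moreover have "arcsin (sin (\<delta> 0)) = \<delta> 0"
    using acute[of 0] bounds[of 0] by (intro arcsin_sin) auto
  ultimately show ?thesis using sines[OF i] by metis
qed

lemma polar_form_right_half_plane:
  fixes p q :: real
  assumes "0 < p"
  obtains \<phi> where "\<bar>\<phi>\<bar> < pi / 2" "p = sqrt (p^2 + q^2) * cos \<phi>" "q = sqrt (p^2 + q^2) * sin \<phi>"
proof
  have "sqrt (1 + (q / p)^2) = sqrt (p^2 + q^2) / p"
    using assms by (simp add: field_simps power2_eq_square real_sqrt_divide flip: real_sqrt_mult)
  then show "p = sqrt (p^2 + q^2) * cos (arctan (q / p))" "q = sqrt (p^2 + q^2) * sin (arctan (q / p))"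
    unfolding cos_arctan sin_arctan using assms by simp_all
  show "\<bar>arctan (q / p)\<bar> < pi / 2"
    using arctan_bounded[of "q / p"] by linarith
qed

section \<open>Fans of triangles\<close>

definition apex_angle :: "(nat \<Rightarrow> real) \<Rightarrow> (nat \<Rightarrow> real) \<Rightarrow> nat \<Rightarrow> real" where
  "apex_angle T X k = alpha (T k) (X k) (T (k+1))"

definition polar_angle :: "(nat \<Rightarrow> real) \<Rightarrow> (nat \<Rightarrow> real) \<Rightarrow> nat \<Rightarrow> real" where
  "polar_angle T X k = (\<Sum>j=1..<k. apex_angle T X j)"

lemma polar_angle_1 [simp]: "polar_angle T X (Suc 0) = 0"
  unfolding polar_angle_def by simp

lemma polar_angle_Suc: "1 \<le> k \<Longrightarrow> polar_angle T X (Suc k) = polar_angle T X k + apex_angle T X k"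
  unfolding polar_angle_def by (simp add: sum.atLeastLessThan_Suc)

text \<open>The circle through the origin with centre \<open>(p, q)\<close> has the polar equation
  \<open>r = 2 (p cos \<theta> + q sin \<theta>)\<close>.\<close>
definition on_circle :: "real \<Rightarrow> real \<Rightarrow> (nat \<Rightarrow> real) \<Rightarrow> (nat \<Rightarrow> real) \<Rightarrow> nat \<Rightarrow> bool" where
  "on_circle p q T X k \<longleftrightarrow> T k = 2 * (p * cos (polar_angle T X k) + q * sin (polar_angle T X k))"

context
  fixes T X :: "nat \<Rightarrow> real" and k :: nat
  assumes k: "1 \<le> k" and tri: "inV (T k) (X k) (T (k+1))"
begin

private lemma sin_apex_pos: "0 < sin (apex_angle T X k)"
  using sin_alpha_pos[OF tri] unfolding apex_angle_def .

private lemma polar_angle_next: "polar_angle T X (k+1) = polar_angle T X k + apex_angle T X k"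
  using polar_angle_Suc[OF k] by simp

lemma on_circle_Suc_iff:
  assumes "on_circle p q T X k"
  shows "on_circle p q T X (k+1) \<longleftrightarrow>
    dA_dt (T k) (X k) (T (k+1)) = q * cos (polar_angle T X k) - p * sin (polar_angle T X k)"
proof -
  let ?a = "apex_angle T X k" and ?t = "polar_angle T X k"
  let ?e = "q * cos ?t - p * sin ?t"
  define d where "d = dA_dt (T k) (X k) (T (k+1))"
  have "d = (T (k+1) - T k * cos ?a) / (2 * sin ?a)"
    using dA_dt_polar[OF tri] unfolding apex_angle_def d_def .
  then have "T (k+1) = T k * cos ?a + 2 * sin ?a * d"
    using sin_apex_pos by (simp add: field_simps)
  then have "d = ?e \<longleftrightarrow> T (k+1) = T k * cos ?a + 2 * sin ?a * ?e"
    using sin_apex_pos by simp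
  moreover have "T k * cos ?a + 2 * sin ?a * ?e = 2 * (p * cos (?t + ?a) + q * sin (?t + ?a))"
    using assms unfolding on_circle_def by (simp add: cos_add sin_add algebra_simps)
  ultimately show ?thesis unfolding on_circle_def polar_angle_next d_def by simp
qed

lemma dA_ds_on_circle:
  assumes "on_circle p q T X k" "on_circle p q T X (k+1)"
  shows "dA_ds (T k) (X k) (T (k+1)) = p * sin (polar_angle T X (k+1)) - q * cos (polar_angle T X (k+1))"
proof -
  let ?a = "apex_angle T X k" and ?t = "polar_angle T X (k+1)"
  have "polar_angle T X k = ?t - ?a" unfolding polar_angle_next by simp
  then have "T k = 2 * (p * cos (?t - ?a) + q * sin (?t - ?a))"
    using assms(1) unfolding on_circle_def by simp
  moreover have "T (k+1) = 2 * (p * cos ?t + q * sin ?t)"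
    using assms(2) unfolding on_circle_def .
  ultimately have "T k - T (k+1) * cos ?a = 2 * sin ?a * (p * sin ?t - q * cos ?t)"
    by (simp add: cos_diff sin_diff algebra_simps)
  then show ?thesis
    using dA_ds_polar[OF tri] sin_apex_pos unfolding apex_angle_def by simp
qed

lemma side_on_circle:
  assumes "on_circle p q T X k" "on_circle p q T X (k+1)"
  shows "X k = 2 * sqrt (p^2 + q^2) * sin (apex_angle T X k)"
proof -
  let ?a = "apex_angle T X k" and ?t = "polar_angle T X k"
  have "(X k)^2 = (T k)^2 + (T (k+1))^2 - 2 * T k * T (k+1) * cos ?a"
    using law_of_cosines[OF tri] unfolding apex_angle_def .
  also have "\<dots> = 4 * (sin ?a)^2 * (p^2 + q^2)"
    using assms sin_cos_squared_add[of ?t] sin_cos_squared_add[of ?a]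
    unfolding on_circle_def polar_angle_next cos_add sin_add by algebra
  also have "\<dots> = (2 * sqrt (p^2 + q^2) * sin ?a)^2"
    by (simp add: power_mult_distrib)
  finally show ?thesis
    using tri sin_apex_pos unfolding inV_def by (simp add: power2_eq_iff_nonneg)
qed

lemma dA_dx_on_circle:
  assumes "on_circle p q T X k" "on_circle p q T X (k+1)"
  shows "dA_dx (T k) (X k) (T (k+1)) = sqrt (p^2 + q^2) * cos (apex_angle T X k)"
proof -
  have "dA_dx (T k) (X k) (T (k+1)) = X k * cos (apex_angle T X k) / (2 * sin (apex_angle T X k))"
    using dA_dx_polar[OF tri] unfolding apex_angle_def .
  also have "\<dots> = sqrt (p^2 + q^2) * cos (apex_angle T X k)"
    unfolding side_on_circle[OF assms] using sin_apex_pos by simp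
  finally show ?thesis .
qed

end

definition fan :: "(nat \<Rightarrow> real) \<Rightarrow> (nat \<Rightarrow> real) \<Rightarrow> nat \<Rightarrow> bool" where
  "fan T X m \<longleftrightarrow> (\<forall>k\<in>{1..m}. inV (T k) (X k) (T (k+1)))"

text \<open>The gradient of the area is \<open>l\<close> times the gradient of the perimeter, read off
  coordinatewise at \<open>T 1\<close>, at \<open>T (m+1)\<close>, at each \<open>X k\<close> and at each interior \<open>T k\<close>.\<close>
definition lagrange_multiplier :: "(nat \<Rightarrow> real) \<Rightarrow> (nat \<Rightarrow> real) \<Rightarrow> nat \<Rightarrow> real \<Rightarrow> bool" where
  "lagrange_multiplier T X m l \<longleftrightarrow>
     dA_dt (T 1) (X 1) (T 2) = l \<and> dA_ds (T m) (X m) (T (m+1)) = l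
     \<and> (\<forall>k\<in>{1..m}. dA_dx (T k) (X k) (T (k+1)) = l)
     \<and> (\<forall>k\<in>{2..m}. dA_ds (T (k-1)) (X (k-1)) (T k) + dA_dt (T k) (X k) (T (k+1)) = 0)"

definition equal_sides :: "(nat \<Rightarrow> real) \<Rightarrow> (nat \<Rightarrow> real) \<Rightarrow> nat \<Rightarrow> bool" where
  "equal_sides T X m \<longleftrightarrow> (\<forall>k\<in>{1..m}. X k = T 1) \<and> T (m+1) = T 1"

definition cocircular :: "(nat \<Rightarrow> real) \<Rightarrow> (nat \<Rightarrow> real) \<Rightarrow> nat \<Rightarrow> bool" where
  "cocircular T X m \<longleftrightarrow> (\<exists>p q. \<forall>k\<in>{1..m+1}. on_circle p q T X k)"

lemma fan_inV: "fan T X m \<Longrightarrow> k \<in> {1..m} \<Longrightarrow> inV (T k) (X k) (T (k+1))"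
  unfolding fan_def by blast

lemma fan_pos:
  assumes "fan T X m" "1 \<le> m"
  shows "k \<in> {1..m+1} \<Longrightarrow> 0 < T k" and "k \<in> {1..m} \<Longrightarrow> 0 < X k"
proof -
  show "0 < T k" if k: "k \<in> {1..m+1}"
  proof (cases "k \<le> m")
    case True
    then show ?thesis using fan_inV[OF assms(1), of k] k by (simp add: inV_def)
  next
    case False
    then have "k = m + 1" using k by simp
    then show ?thesis using fan_inV[OF assms(1), of m] assms(2) by (simp add: inV_def)
  qed
  show "0 < X k" if "k \<in> {1..m}"
    using fan_inV[OF assms(1) that] by (simp add: inV_def)
qed

text \<open>Once \<open>M\<^sub>k\<^sub>-\<^sub>1\<close> and \<open>M\<^sub>k\<close> are on the circle, the condition at \<open>t\<^sub>k\<close> puts \<open>M\<^sub>k\<^sub>+\<^sub>1\<close> on it.\<close>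
lemma lagrange_multiplier_imp_on_circle:
  assumes fan: "fan T X m" and lag: "lagrange_multiplier T X m l"
  shows "k \<in> {1..m+1} \<Longrightarrow> on_circle (T 1 / 2) l T X k"
proof (induction k rule: less_induct)
  case (less k)
  show ?case
  proof (cases "k = 1")
    case True
    then show ?thesis unfolding on_circle_def by simp
  next
    case False
    then obtain j where j: "k = j + 1" "j \<in> {1..m}"
      using less.prems by (intro that[of "k - 1"]) auto
    let ?t = "polar_angle T X j"
    have "dA_dt (T j) (X j) (T (j+1)) = l * cos ?t - T 1 / 2 * sin ?t"
    proof (cases "j = 1")
      case True
      then show ?thesis using lag unfolding lagrange_multiplier_def by (simp add: numeral_2_eq_2)
    next
      case False
      then have j': "j - 1 \<in> {1..m}" "j - 1 + 1 = j" "j \<in> {2..m}" using j by auto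
      have "on_circle (T 1 / 2) l T X (j-1)" "on_circle (T 1 / 2) l T X (j-1+1)"
        using less.IH j j' by auto
      then have "dA_ds (T (j-1)) (X (j-1)) (T j) = T 1 / 2 * sin ?t - l * cos ?t"
        using dA_ds_on_circle[of "j-1" T X, OF _ fan_inV[OF fan j'(1)]] j' by simp
      moreover have "dA_ds (T (j-1)) (X (j-1)) (T j) + dA_dt (T j) (X j) (T (j+1)) = 0"
        using lag j'(3) unfolding lagrange_multiplier_def by blast
      ultimately show ?thesis by linarith
    qed
    moreover have "on_circle (T 1 / 2) l T X j" "1 \<le> j" using less.IH j by auto
    ultimately have "on_circle (T 1 / 2) l T X (j+1)"
      using on_circle_Suc_iff[of j T X, OF _ fan_inV[OF fan j(2)]] by blast
    then show ?thesis using j(1) by simp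
  qed
qed

lemma lagrange_multiplier_imp_side_eq:
  assumes fan: "fan T X m" and m: "1 \<le> m" and lag: "lagrange_multiplier T X m l" and k: "k \<in> {1..m}"
  shows "X k = T 1"
proof -
  let ?p = "T 1 / 2" and ?a = "apex_angle T X k"
  let ?r = "sqrt (?p^2 + l^2)"
  have tri: "inV (T k) (X k) (T (k+1))" and "1 \<le> k" using fan_inV[OF fan k] k by auto
  have on: "on_circle ?p l T X k" "on_circle ?p l T X (k+1)"
    using lagrange_multiplier_imp_on_circle[OF fan lag] k by auto
  have "l = ?r * cos ?a"
    using dA_dx_on_circle[OF \<open>1 \<le> k\<close> tri on] lag k unfolding lagrange_multiplier_def by simp
  then have "l^2 = (?r * cos ?a)^2"
    by (rule arg_cong)
  also have "\<dots> = (?p^2 + l^2) * (cos ?a)^2"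
    by (simp add: power_mult_distrib)
  finally have l2: "l^2 = (?p^2 + l^2) * (cos ?a)^2" .
  have "(X k)^2 = 4 * (?p^2 + l^2) * (sin ?a)^2"
    using side_on_circle[OF \<open>1 \<le> k\<close> tri on] by (simp add: power_mult_distrib)
  also have "\<dots> = 4 * (?p^2 + l^2) - 4 * ((?p^2 + l^2) * (cos ?a)^2)"
    by (simp add: sin_squared_eq algebra_simps)
  also have "\<dots> = (T 1)^2"
    unfolding l2[symmetric] by (simp add: power_divide)
  finally show ?thesis
    using fan_pos[OF fan m] k by (simp add: less_imp_le)
qed

lemma lagrange_multiplier_imp_last_radius_eq:
  assumes fan: "fan T X m" and m: "1 \<le> m" and lag: "lagrange_multiplier T X m l"
  shows "T (m+1) = T 1"
proof -
  let ?p = "T 1 / 2" and ?t = "polar_angle T X (m+1)"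
  have on: "on_circle ?p l T X m" "on_circle ?p l T X (m+1)"
    using lagrange_multiplier_imp_on_circle[OF fan lag] m by auto
  have "l = ?p * sin ?t - l * cos ?t"
    using dA_ds_on_circle[OF m fan_inV[OF fan] on] lag m unfolding lagrange_multiplier_def by simp
  moreover have "T (m+1) = 2 * (?p * cos ?t + l * sin ?t)"
    using on(2) unfolding on_circle_def .
  ultimately have "(T (m+1))^2 = (T 1)^2"
    using sin_cos_squared_add[of ?t] by algebra
  then show ?thesis
    using fan_pos[OF fan m] m by (simp add: less_imp_le)
qed

lemma lagrange_multiplier_imp_equal_sides:
  assumes "fan T X m" "1 \<le> m" "lagrange_multiplier T X m l"
  shows "equal_sides T X m"
  unfolding equal_sides_def
  using lagrange_multiplier_imp_side_eq[OF assms] lagrange_multiplier_imp_last_radius_eq[OF assms] by blast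

lemma polar_angle_Suc_eq: "polar_angle T X (Suc m) = (\<Sum>i<m. apex_angle T X (Suc i))"
  unfolding polar_angle_def
  by (metis One_nat_def atLeast0LessThan sum.atLeast_Suc_lessThan_Suc_shift comp_def sum.cong)

lemma on_circle_polar:
  assumes "p = r * cos \<phi>" "q = r * sin \<phi>"
  shows "on_circle p q T X k \<longleftrightarrow> T k = 2 * r * cos (polar_angle T X k - \<phi>)"
  unfolding on_circle_def assms cos_diff by (simp add: algebra_simps)

text \<open>For vertices on a circle with centre \<open>r (cos \<phi>, sin \<phi>)\<close> through \<open>M\<^sub>n\<close>, the inscribed angles
  subtending the \<open>m + 2\<close> sides \<open>M\<^sub>n M\<^sub>1, M\<^sub>1 M\<^sub>2, \<dots>, M\<^sub>m\<^sub>+\<^sub>1 M\<^sub>n\<close>.\<close>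
definition inscribed_angle :: "(nat \<Rightarrow> real) \<Rightarrow> (nat \<Rightarrow> real) \<Rightarrow> nat \<Rightarrow> real \<Rightarrow> nat \<Rightarrow> real" where
  "inscribed_angle T X m \<phi> i =
    (if i = 0 then pi / 2 - \<phi> else if i \<le> m then apex_angle T X i else pi / 2 - (polar_angle T X (m+1) - \<phi>))"

context
  fixes T X :: "nat \<Rightarrow> real" and m :: nat and r \<phi> :: real
  assumes fan: "fan T X m" and m: "1 \<le> m"
    and on_all: "\<forall>k\<in>{1..m+1}. on_circle (r * cos \<phi>) (r * sin \<phi>) T X k"
    and r: "0 < r" and \<phi>: "\<bar>\<phi>\<bar> < pi / 2"
begin

private lemmas on = on_all[rule_format]

lemma on_circle_offset_bound: "k \<in> {1..m+1} \<Longrightarrow> \<bar>polar_angle T X k - \<phi>\<bar> < pi / 2"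
proof (induction k rule: less_induct)
  case (less k)
  show ?case
  proof (cases "k = 1")
    case True
    then show ?thesis using \<phi> by simp
  next
    case False
    then obtain j where j: "k = j + 1" "j \<in> {1..m}"
      using less.prems by (intro that[of "k - 1"]) auto
    let ?\<psi> = "polar_angle T X k - \<phi>"
    have "\<bar>polar_angle T X j - \<phi>\<bar> < pi / 2" using less.IH j by simp
    then have IH: "- (pi / 2) < polar_angle T X j - \<phi>" "polar_angle T X j - \<phi> < pi / 2"
      unfolding abs_less_iff by linarith+
    have a: "0 < apex_angle T X j" "apex_angle T X j < pi"
      using alpha_bounds[OF fan_inV[OF fan j(2)]] unfolding apex_angle_def by auto
    have step: "?\<psi> = polar_angle T X j - \<phi> + apex_angle T X j"
      using polar_angle_Suc[of j T X] j by simp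
    have "0 < 2 * r * cos ?\<psi>"
      using on[OF less.prems] fan_pos(1)[OF fan m less.prems] on_circle_polar[of _ r \<phi>] by simp
    then have "0 < cos ?\<psi>" using r by (simp add: zero_less_mult_iff)
    have "?\<psi> < pi / 2"
    proof (rule ccontr)
      assume "\<not> ?\<psi> < pi / 2"
      then have "0 \<le> sin (?\<psi> - pi / 2)"
        using step IH a by (intro sin_ge_zero) linarith+
      then show False using \<open>0 < cos ?\<psi>\<close> by (simp add: sin_diff)
    qed
    then show ?thesis using step IH a unfolding abs_less_iff by linarith
  qed
qed

lemma inscribed_angle_bounds: "i \<le> m + 1 \<Longrightarrow> 0 < inscribed_angle T X m \<phi> i \<and> inscribed_angle T X m \<phi> i < pi"
proof -
  assume i: "i \<le> m + 1"
  let ?\<psi> = "polar_angle T X (m+1) - \<phi>"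
  have "\<bar>?\<psi>\<bar> < pi / 2" using on_circle_offset_bound[of "m+1"] m by simp
  then have \<psi>: "- (pi / 2) < ?\<psi>" "?\<psi> < pi / 2" and \<phi>': "- (pi / 2) < \<phi>" "\<phi> < pi / 2"
    using \<phi> unfolding abs_less_iff by linarith+
  consider "i = 0" | "i \<in> {1..m}" | "i = m + 1" using i by fastforce
  then show ?thesis
  proof cases
    case 2
    then show ?thesis
      using alpha_bounds[OF fan_inV[OF fan 2]] unfolding inscribed_angle_def apex_angle_def by simp
  qed (use \<psi> \<phi>' in \<open>auto simp: inscribed_angle_def\<close>)
qed

lemma sum_inscribed_angle: "(\<Sum>i\<le>m+1. inscribed_angle T X m \<phi> i) = pi"
proof -
  have "(\<Sum>i\<le>m+1. inscribed_angle T X m \<phi> i)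
      = inscribed_angle T X m \<phi> 0 + (\<Sum>i<m. inscribed_angle T X m \<phi> (Suc i)) + inscribed_angle T X m \<phi> (m+1)"
    by (simp add: sum.atMost_shift)
  also have "(\<Sum>i<m. inscribed_angle T X m \<phi> (Suc i)) = polar_angle T X (m+1)"
    unfolding Suc_eq_plus1[symmetric] polar_angle_Suc_eq
    by (rule sum.cong) (auto simp: inscribed_angle_def)
  finally show ?thesis unfolding inscribed_angle_def by simp
qed

lemma sin_inscribed_angle:
  assumes eq: "equal_sides T X m" and i: "i \<le> m + 1"
  shows "2 * r * sin (inscribed_angle T X m \<phi> i) = T 1"
proof -
  consider "i = 0" | "i \<in> {1..m}" | "i = m + 1" using i by fastforce
  then show ?thesis
  proof cases
    case 1
    then show ?thesis
      using on[of 1] m on_circle_polar[of _ r \<phi>] by (simp add: inscribed_angle_def sin_diff)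
  next
    case 2
    have "(r * cos \<phi>)^2 + (r * sin \<phi>)^2 = r^2"
      using sin_cos_squared_add[of \<phi>] by algebra
    then show ?thesis
      using side_on_circle[OF _ fan_inV[OF fan 2] on on] eq 2 r
      by (simp add: inscribed_angle_def equal_sides_def)
  next
    case 3
    then show ?thesis
      using on[of "m+1"] eq on_circle_polar[of _ r \<phi>] m
      by (simp add: inscribed_angle_def equal_sides_def sin_diff)
  qed
qed

lemma equal_sides_on_circle_angles:
  assumes eq: "equal_sides T X m"
  shows "k \<in> {1..m} \<Longrightarrow> apex_angle T X k = pi / 2 - \<phi>"
    and "polar_angle T X (m+1) = 2 * \<phi>"
proof -
  have same: "inscribed_angle T X m \<phi> i = inscribed_angle T X m \<phi> 0" if "i \<le> m + 1" for i
  proof (rule angles_eq_if_sines_eq[of "m+1"])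
    show "sin (inscribed_angle T X m \<phi> j) = sin (inscribed_angle T X m \<phi> 0)" if "j \<le> m + 1" for j
    proof -
      have "2 * r * sin (inscribed_angle T X m \<phi> j) = 2 * r * sin (inscribed_angle T X m \<phi> 0)"
        using sin_inscribed_angle[OF eq that] sin_inscribed_angle[OF eq, of 0] by simp
      then show ?thesis using r by simp
    qed
  qed (use m that inscribed_angle_bounds sum_inscribed_angle in auto)
  show "apex_angle T X k = pi / 2 - \<phi>" if "k \<in> {1..m}"
    using same[of k] that by (simp add: inscribed_angle_def)
  show "polar_angle T X (m+1) = 2 * \<phi>"
    using same[of "m+1"] m by (simp add: inscribed_angle_def)
qed

lemma equal_sides_on_circle_lagrange_multiplier:
  assumes eq: "equal_sides T X m"
  shows "lagrange_multiplier T X m (r * sin \<phi>)"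
proof -
  let ?p = "r * cos \<phi>" and ?q = "r * sin \<phi>"
  note apex = equal_sides_on_circle_angles(1)[OF eq] and last = equal_sides_on_circle_angles(2)[OF eq]
  have on_pair: "1 \<le> k \<and> on_circle ?p ?q T X k \<and> on_circle ?p ?q T X (k+1)" if "k \<in> {1..m}" for k
    using on that by auto
  have dA_dt: "dA_dt (T k) (X k) (T (k+1)) = ?q * cos (polar_angle T X k) - ?p * sin (polar_angle T X k)"
    if "k \<in> {1..m}" for k
    using on_circle_Suc_iff[of k T X, OF _ fan_inV[OF fan that]] on_pair[OF that] by blast
  have dA_ds: "dA_ds (T k) (X k) (T (k+1)) = ?p * sin (polar_angle T X (k+1)) - ?q * cos (polar_angle T X (k+1))"
    if "k \<in> {1..m}" for k
    using dA_ds_on_circle[of k T X, OF _ fan_inV[OF fan that]] on_pair[OF that] by blast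
  show ?thesis
    unfolding lagrange_multiplier_def
  proof (intro conjI ballI)
    show "dA_dt (T 1) (X 1) (T 2) = ?q"
      using dA_dt[of 1] m by (simp add: numeral_2_eq_2)
    have "sin \<phi> = sin (2 * \<phi>) * cos \<phi> - cos (2 * \<phi>) * sin \<phi>"
      using sin_diff[of "2 * \<phi>" \<phi>] by simp
    then have "?p * sin (2 * \<phi>) - ?q * cos (2 * \<phi>) = ?q"
      by algebra
    then show "dA_ds (T m) (X m) (T (m+1)) = ?q"
      using dA_ds[of m] last m by simp
    show "dA_dx (T k) (X k) (T (k+1)) = ?q" if "k \<in> {1..m}" for k
    proof -
      have "dA_dx (T k) (X k) (T (k+1)) = sqrt (?p^2 + ?q^2) * cos (apex_angle T X k)"
        using dA_dx_on_circle[of k T X, OF _ fan_inV[OF fan that]] on_pair[OF that] by blast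
      moreover have "?p^2 + ?q^2 = r^2"
        using sin_cos_squared_add[of \<phi>] by algebra
      ultimately show ?thesis
        using apex[OF that] r by (simp add: cos_diff)
    qed
    show "dA_ds (T (k-1)) (X (k-1)) (T k) + dA_dt (T k) (X k) (T (k+1)) = 0" if "k \<in> {2..m}" for k
    proof -
      have "k - 1 \<in> {1..m}" "k - 1 + 1 = k" "k \<in> {1..m}" using that by auto
      then show ?thesis using dA_ds[of "k-1"] dA_dt[of k] by simp
    qed
  qed
qed

end

lemma equal_sides_cocircular_imp_lagrange_multiplier:
  assumes fan: "fan T X m" and m: "1 \<le> m" and eq: "equal_sides T X m" and cyc: "cocircular T X m"
  shows "\<exists>l. lagrange_multiplier T X m l"
proof -
  obtain p q where on: "\<forall>k\<in>{1..m+1}. on_circle p q T X k"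
    using cyc unfolding cocircular_def by blast
  let ?r = "sqrt (p^2 + q^2)"
  have "0 < p" using on fan_pos(1)[OF fan m, of 1] m unfolding on_circle_def by simp
  then obtain \<phi> where \<phi>: "\<bar>\<phi>\<bar> < pi / 2" and pq: "p = ?r * cos \<phi>" "q = ?r * sin \<phi>"
    by (rule polar_form_right_half_plane)
  have "0 < ?r" using \<open>0 < p\<close> by (simp add: add_pos_nonneg)
  have "\<forall>k\<in>{1..m+1}. on_circle (?r * cos \<phi>) (?r * sin \<phi>) T X k"
    unfolding pq[symmetric] by (rule on)
  from equal_sides_on_circle_lagrange_multiplier[OF fan m this \<open>0 < ?r\<close> \<phi> eq]
  show ?thesis ..
qed

section \<open>The polygon of a point of \<open>\<Omega>\<^sub>n\<close>\<close>

lemma norm_polar_diff_sq: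
  "(cmod (complex_of_real t * cis a - complex_of_real s * cis b))^2 = t^2 + s^2 - 2 * t * s * cos (b - a)"
proof -
  have "(cmod (complex_of_real t * cis a - complex_of_real s * cis b))^2
      = (t * cos a - s * cos b)^2 + (t * sin a - s * sin b)^2"
    by (simp add: cmod_power2)
  also have "\<dots> = t^2 + s^2 - 2 * t * s * cos (b - a)"
    using sin_cos_squared_add[of a] sin_cos_squared_add[of b] unfolding cos_diff by algebra
  finally show ?thesis .
qed

lemma theta_eq_polar_angle: "theta idx \<omega> = polar_angle (tc idx \<omega>) (xc idx \<omega>)"
  unfolding theta_def polar_angle_def apex_angle_def by simp

lemma Omega_fan: "\<omega> \<in> Omega n idx \<Longrightarrow> fan (tc idx \<omega>) (xc idx \<omega>) (n - 2)"
  unfolding Omega_def fan_def by auto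

definition side_length :: "nat \<Rightarrow> (nat \<Rightarrow> 'd) \<Rightarrow> real^'d \<Rightarrow> nat \<Rightarrow> real" where
  "side_length n idx \<omega> k = dist (vert n idx \<omega> k) (vert n idx \<omega> (k mod n + 1))"

context
  fixes n :: nat and idx :: "nat \<Rightarrow> 'd::finite" and \<omega> :: "real^'d"
  assumes n: "3 \<le> n" and \<omega>: "\<omega> \<in> Omega n idx"
begin

private abbreviation "T \<equiv> tc idx \<omega>"
private abbreviation "X \<equiv> xc idx \<omega>"

private lemma fan: "fan T X (n - 2)"
  using Omega_fan[OF \<omega>] .

private lemma m: "1 \<le> n - 2"
  using n by simp

lemma vert_polar: "k \<in> {1..n-1} \<Longrightarrow> vert n idx \<omega> k = complex_of_real (T k) * cis (polar_angle T X k)"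
  unfolding vert_def theta_eq_polar_angle using n by auto

lemma side_length_n: "side_length n idx \<omega> n = T 1"
  using vert_polar[of 1] fan_pos(1)[OF fan m, of 1] n unfolding side_length_def vert_def
  by (simp add: dist_norm)

lemma side_length_pred_n: "side_length n idx \<omega> (n-1) = T (n-1)"
proof -
  have "(n - 1) mod n + 1 = n" using n by simp
  moreover have "n - 1 \<in> {1..n-2+1}" using n by auto
  then have "0 < T (n-1)" by (rule fan_pos(1)[OF fan m])
  ultimately show ?thesis
    unfolding side_length_def using vert_polar[of "n-1"] n by (simp add: dist_norm vert_def norm_mult)
qed

lemma side_length_interior:
  assumes k: "k \<in> {1..n-2}"
  shows "side_length n idx \<omega> k = X k"
proof -
  have tri: "inV (T k) (X k) (T (k+1))" using fan_inV[OF fan k] .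
  have "k < n" using k n by auto
  then have "k mod n + 1 = k + 1" by simp
  moreover have "k \<in> {1..n-1}" "k+1 \<in> {1..n-1}" using k n by auto
  ultimately have "side_length n idx \<omega> k
      = cmod (complex_of_real (T k) * cis (polar_angle T X k) - complex_of_real (T (k+1)) * cis (polar_angle T X (k+1)))"
    unfolding side_length_def using vert_polar by (simp add: dist_norm)
  moreover have "\<dots>^2 = (X k)^2"
    unfolding norm_polar_diff_sq using polar_angle_Suc[of k T X] law_of_cosines[OF tri] k
    by (simp add: apex_angle_def)
  ultimately show ?thesis using tri by (simp add: inV_def)
qed

lemma equilateral_iff_equal_sides: "equilateral n idx \<omega> \<longleftrightarrow> equal_sides T X (n-2)"
proof -
  have last: "n - 2 + 1 = n - 1" using n by simp
  have "equilateral n idx \<omega> \<longleftrightarrow> (\<forall>k\<in>{1..n}. side_length n idx \<omega> k = side_length n idx \<omega> n)"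
  proof -
    have "n \<in> {1..n}" using n by simp
    then show ?thesis unfolding equilateral_def side_length_def[symmetric] by metis
  qed
  also have "\<dots> \<longleftrightarrow> equal_sides T X (n-2)"
    unfolding equal_sides_def
  proof (intro iffI conjI ballI)
    assume H: "\<forall>k\<in>{1..n}. side_length n idx \<omega> k = side_length n idx \<omega> n"
    show "X k = T 1" if "k \<in> {1..n-2}" for k
      using H[rule_format, of k] side_length_interior[OF that] side_length_n that by auto
    show "T (n - 2 + 1) = T 1"
      using H[rule_format, of "n-1"] side_length_pred_n side_length_n last n by simp
  next
    assume H: "(\<forall>k\<in>{1..n-2}. X k = T 1) \<and> T (n - 2 + 1) = T 1"
    fix k assume "k \<in> {1..n}"
    then consider "k \<in> {1..n-2}" | "k = n - 1" | "k = n" by fastforce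
    then show "side_length n idx \<omega> k = side_length n idx \<omega> n"
      by cases (use H side_length_interior side_length_n side_length_pred_n last in auto)
  qed
  finally show ?thesis .
qed

lemma inscribable_iff_cocircular: "inscribable n idx \<omega> \<longleftrightarrow> cocircular T X (n-2)"
proof
  assume "inscribable n idx \<omega>"
  then obtain c r where cr: "\<And>k. k \<in> {1..n} \<Longrightarrow> dist (vert n idx \<omega> k) c = r"
    unfolding inscribable_def by blast
  have r: "r = cmod c" using cr[of n] n unfolding vert_def by (simp add: dist_norm)
  have "on_circle (Re c) (Im c) T X k" if k: "k \<in> {1..n-2+1}" for k
  proof -
    let ?t = "polar_angle T X k"
    have "k \<in> {1..n-1}" "k \<in> {1..n}" using k n by auto
    then have "(cmod (complex_of_real (T k) * cis ?t - c))^2 = (cmod c)^2"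
      using cr[of k] r vert_polar[of k] by (simp add: dist_norm)
    then have "(T k * cos ?t - Re c)^2 + (T k * sin ?t - Im c)^2 = (Re c)^2 + (Im c)^2"
      by (simp add: cmod_power2)
    then have "T k * T k = T k * (2 * (Re c * cos ?t + Im c * sin ?t))"
      using sin_cos_squared_add[of ?t] by algebra
    then show ?thesis
      using fan_pos(1)[OF fan m k] unfolding on_circle_def by simp
  qed
  then show "cocircular T X (n-2)" unfolding cocircular_def by blast
next
  assume "cocircular T X (n-2)"
  then obtain p q where pq: "\<And>k. k \<in> {1..n-2+1} \<Longrightarrow> on_circle p q T X k"
    unfolding cocircular_def by blast
  have "dist (vert n idx \<omega> k) (Complex p q) = cmod (Complex p q)" if k: "k \<in> {1..n}" for k
  proof (cases "k = n")
    case False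
    then have k': "k \<in> {1..n-1}" "k \<in> {1..n-2+1}" using k n by auto
    let ?t = "polar_angle T X k"
    have "(cmod (complex_of_real (T k) * cis ?t - Complex p q))^2 = (T k * cos ?t - p)^2 + (T k * sin ?t - q)^2"
      by (simp add: cmod_power2)
    also have "\<dots> = p^2 + q^2"
      using pq[OF k'(2)] sin_cos_squared_add[of ?t] unfolding on_circle_def by algebra
    also have "\<dots> = (cmod (Complex p q))^2"
      by (simp add: cmod_power2)
    finally show ?thesis
      using vert_polar[OF k'(1)] by (simp add: dist_norm power2_eq_iff_nonneg)
  qed (simp add: vert_def dist_norm)
  then show "inscribable n idx \<omega>" unfolding inscribable_def by blast
qed

lemma regular_iff_lagrange_multiplier: "regular n idx \<omega> \<longleftrightarrow> (\<exists>l. lagrange_multiplier T X (n-2) l)"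
  unfolding regular_def equilateral_iff_equal_sides inscribable_iff_cocircular
  using lagrange_multiplier_imp_equal_sides[OF fan m] equal_sides_cocircular_imp_lagrange_multiplier[OF fan m]
    lagrange_multiplier_imp_on_circle[OF fan] unfolding cocircular_def by blast

end

section \<open>Differentials\<close>

lemma has_derivative_heron_area:
  fixes f1 f2 f3 :: "'a::real_normed_vector \<Rightarrow> real"
  assumes lin: "bounded_linear f1" "bounded_linear f2" "bounded_linear f3"
    and pos: "0 < heron (f1 w) (f2 w) (f3 w)"
  shows "((\<lambda>v. sqrt (heron (f1 v) (f2 v) (f3 v)) / 4) has_derivative
     (\<lambda>h. dA_dt (f1 w) (f2 w) (f3 w) * f1 h + dA_dx (f1 w) (f2 w) (f3 w) * f2 h
        + dA_ds (f1 w) (f2 w) (f3 w) * f3 h)) (at w)"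
proof -
  have "(f1 has_derivative f1) (at w)" "(f2 has_derivative f2) (at w)" "(f3 has_derivative f3) (at w)"
    using lin by (auto intro: bounded_linear_imp_has_derivative)
  then have "((\<lambda>v. heron (f1 v) (f2 v) (f3 v)) has_derivative
     (\<lambda>h. 4 * f1 w * ((f2 w)^2 + (f3 w)^2 - (f1 w)^2) * f1 h
        + 4 * f2 w * ((f1 w)^2 + (f3 w)^2 - (f2 w)^2) * f2 h
        + 4 * f3 w * ((f1 w)^2 + (f2 w)^2 - (f3 w)^2) * f3 h)) (at w)"
    unfolding heron_def
    by (auto intro!: derivative_eq_intros simp: algebra_simps power2_eq_square)
  from has_derivative_divide[OF DERIV_compose_FDERIV[OF DERIV_real_sqrt[OF pos] this]
      has_derivative_const, of 4]
  show ?thesis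
    by (rule has_derivative_eq_rhs)
      (use pos in \<open>simp_all add: fun_eq_iff dA_dt_def dA_dx_def dA_ds_def field_simps\<close>)
qed

definition area_deriv :: "nat \<Rightarrow> (nat \<Rightarrow> 'd) \<Rightarrow> real^'d \<Rightarrow> real^'d \<Rightarrow> real" where
  "area_deriv n idx \<omega> h = (\<Sum>k=1..n-2.
      dA_dt (tc idx \<omega> k) (xc idx \<omega> k) (tc idx \<omega> (k+1)) * tc idx h k
    + dA_dx (tc idx \<omega> k) (xc idx \<omega> k) (tc idx \<omega> (k+1)) * xc idx h k
    + dA_ds (tc idx \<omega> k) (xc idx \<omega> k) (tc idx \<omega> (k+1)) * tc idx h (k+1))"

lemma bounded_linear_tc: "bounded_linear (\<lambda>\<omega>. tc idx \<omega> k)"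
  unfolding tc_def by (rule bounded_linear_vec_nth)

lemma bounded_linear_xc: "bounded_linear (\<lambda>\<omega>. xc idx \<omega> k)"
  unfolding xc_def by (rule bounded_linear_vec_nth)

lemma Omega_heron_pos: "\<omega> \<in> Omega n idx \<Longrightarrow> k \<in> {1..n-2} \<Longrightarrow> 0 < heron (tc idx \<omega> k) (xc idx \<omega> k) (tc idx \<omega> (k+1))"
  by (rule heron_pos) (simp add: Omega_def)

lemma has_derivative_area:
  assumes "\<omega> \<in> Omega n idx"
  shows "(area n idx has_derivative area_deriv n idx \<omega>) (at \<omega>)"
  unfolding area_def[abs_def] area_deriv_def[abs_def]
  by (intro has_derivative_sum has_derivative_heron_area bounded_linear_tc bounded_linear_xc
      Omega_heron_pos[OF assms])

lemma bounded_linear_perim: "bounded_linear (perim n idx)"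
  unfolding perim_def[abs_def]
  by (intro bounded_linear_add bounded_linear_sum bounded_linear_tc bounded_linear_xc)

text \<open>Euler's identity for the area, which is homogeneous of degree 2 in the side lengths.\<close>
lemma area_deriv_self:
  assumes "\<omega> \<in> Omega n idx"
  shows "area_deriv n idx \<omega> \<omega> = 2 * area n idx \<omega>"
  unfolding area_deriv_def area_def sum_distrib_left
proof (rule sum.cong[OF refl])
  fix k assume "k \<in> {1..n-2}"
  from dA_euler[OF Omega_heron_pos[OF assms this]] show "dA_dt (tc idx \<omega> k) (xc idx \<omega> k) (tc idx \<omega> (k+1)) * tc idx \<omega> k
      + dA_dx (tc idx \<omega> k) (xc idx \<omega> k) (tc idx \<omega> (k+1)) * xc idx \<omega> k
      + dA_ds (tc idx \<omega> k) (xc idx \<omega> k) (tc idx \<omega> (k+1)) * tc idx \<omega> (k+1)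
    = 2 * (sqrt (heron (tc idx \<omega> k) (xc idx \<omega> k) (tc idx \<omega> (k+1))) / 4)"
    by simp
qed

lemma area_pos: "3 \<le> n \<Longrightarrow> \<omega> \<in> Omega n idx \<Longrightarrow> 0 < area n idx \<omega>"
  unfolding area_def by (intro sum_pos) (use Omega_heron_pos in auto)

lemma coordinates_exist:
  fixes T X :: "nat \<Rightarrow> real"
  assumes bij: "bij_betw idx {..<2*n-3} (UNIV :: 'd::finite set)"
  obtains h :: "real^'d" where "\<And>k. k \<in> {1..n-1} \<Longrightarrow> tc idx h k = T k"
    and "\<And>k. k \<in> {1..n-2} \<Longrightarrow> xc idx h k = X k"
proof
  let ?inv = "inv_into {..<2*n-3} idx"
  define h :: "real^'d" where
    "h = (\<chi> i. if even (?inv i) then T (?inv i div 2 + 1) else X (?inv i div 2 + 1))"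
  have inv: "?inv (idx j) = j" if "j < 2*n-3" for j
    using bij_betw_imp_inj_on[OF bij] that by (simp add: inv_into_f_f)
  show "tc idx h k = T k" if "k \<in> {1..n-1}" for k
  proof -
    have "(2*k-2) div 2 + 1 = k" "2*k-2 < 2*n-3" using that by auto
    then show ?thesis using inv[of "2*k-2"] unfolding h_def tc_def by auto
  qed
  show "xc idx h k = X k" if "k \<in> {1..n-2}" for k
  proof -
    have "(2*k-1) div 2 + 1 = k" "odd (2*k-1)" "2*k-1 < 2*n-3" using that by auto
    then show ?thesis using inv[of "2*k-1"] unfolding h_def xc_def by auto
  qed
qed

lemma sum_regroup_shared_sides:
  fixes a b c T X :: "nat \<Rightarrow> real"
  assumes "1 \<le> m"
  shows "(\<Sum>k=1..m. a k * T k + b k * X k + c k * T (k+1))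
    = a 1 * T 1 + (\<Sum>k=2..m. (c (k-1) + a k) * T k) + (\<Sum>k=1..m. b k * X k) + c m * T (m+1)"
  using assms
proof (induction m rule: dec_induct)
  case (step m)
  have "(\<Sum>k=2..Suc m. (c (k-1) + a k) * T k) = (\<Sum>k=2..m. (c (k-1) + a k) * T k) + (c m + a (Suc m)) * T (Suc m)"
    using step.hyps by (simp add: sum.cl_ivl_Suc)
  then show ?case using step by (simp add: sum.cl_ivl_Suc algebra_simps)
qed simp

lemma linear_form_eq_perimeter_form_iff:
  fixes a b c :: "nat \<Rightarrow> real"
  assumes m: "1 \<le> m"
  shows "(\<forall>T X. (\<Sum>k=1..m. a k * T k + b k * X k + c k * T (k+1))
            = l * (T 1 + (\<Sum>k=1..m. X k) + T (m+1)))
    \<longleftrightarrow> a 1 = l \<and> c m = l \<and> (\<forall>k\<in>{1..m}. b k = l) \<and> (\<forall>k\<in>{2..m}. c (k-1) + a k = 0)"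
  unfolding sum_regroup_shared_sides[OF m]
proof (intro iffI conjI ballI allI)
  let ?\<delta> = "\<lambda>j k. of_bool (k = j) :: real"
  assume H: "\<forall>T X. a 1 * T 1 + (\<Sum>k=2..m. (c (k-1) + a k) * T k) + (\<Sum>k=1..m. b k * X k) + c m * T (m+1)
      = l * (T 1 + sum X {1..m} + T (m+1))"
  show "a 1 = l" using H[rule_format, of "?\<delta> 1" "\<lambda>_. 0"] m by simp
  show "c m = l" using H[rule_format, of "?\<delta> (m+1)" "\<lambda>_. 0"] m by simp
  show "b k = l" if "k \<in> {1..m}" for k
    using H[rule_format, of "\<lambda>_. 0" "?\<delta> k"] that by simp
  show "c (k-1) + a k = 0" if "k \<in> {2..m}" for k
    using H[rule_format, of "?\<delta> k" "\<lambda>_. 0"] that by simp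
next
  fix T X :: "nat \<Rightarrow> real"
  assume "a 1 = l \<and> c m = l \<and> (\<forall>k\<in>{1..m}. b k = l) \<and> (\<forall>k\<in>{2..m}. c (k-1) + a k = 0)"
  then show "a 1 * T 1 + (\<Sum>k=2..m. (c (k-1) + a k) * T k) + (\<Sum>k=1..m. b k * X k) + c m * T (m+1)
      = l * (T 1 + sum X {1..m} + T (m+1))"
    by (simp add: sum_distrib_left algebra_simps)
qed

context
  fixes n :: nat and idx :: "nat \<Rightarrow> 'd::finite"
  assumes n: "3 \<le> n" and bij: "bij_betw idx {..<2*n-3} (UNIV :: 'd set)"
begin

lemma area_deriv_proportional_iff:
  assumes \<omega>: "\<omega> \<in> Omega n idx"
  shows "(\<forall>h. area_deriv n idx \<omega> h = l * perim n idx h)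
    \<longleftrightarrow> lagrange_multiplier (tc idx \<omega>) (xc idx \<omega>) (n-2) l"
proof -
  define m where "m = n - 2"
  have m: "1 \<le> m" "n - 1 = m + 1" using n unfolding m_def by auto
  define a where "a k = dA_dt (tc idx \<omega> k) (xc idx \<omega> k) (tc idx \<omega> (k+1))" for k
  define b where "b k = dA_dx (tc idx \<omega> k) (xc idx \<omega> k) (tc idx \<omega> (k+1))" for k
  define c where "c k = dA_ds (tc idx \<omega> k) (xc idx \<omega> k) (tc idx \<omega> (k+1))" for k
  have "(\<forall>h. area_deriv n idx \<omega> h = l * perim n idx h)
    \<longleftrightarrow> (\<forall>T X. (\<Sum>k=1..m. a k * T k + b k * X k + c k * T (k+1))
            = l * (T 1 + (\<Sum>k=1..m. X k) + T (m+1)))"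
  proof
    assume H: "\<forall>h. area_deriv n idx \<omega> h = l * perim n idx h"
    show "\<forall>T X. (\<Sum>k=1..m. a k * T k + b k * X k + c k * T (k+1)) = l * (T 1 + (\<Sum>k=1..m. X k) + T (m+1))"
    proof (intro allI)
      fix T X :: "nat \<Rightarrow> real"
      obtain h where hT: "\<And>k. k \<in> {1..n-1} \<Longrightarrow> tc idx h k = T k"
        and hX: "\<And>k. k \<in> {1..n-2} \<Longrightarrow> xc idx h k = X k"
        using coordinates_exist[OF bij] by blast
      have "area_deriv n idx \<omega> h = (\<Sum>k=1..m. a k * T k + b k * X k + c k * T (k+1))"
        unfolding area_deriv_def a_def b_def c_def m_def
        by (intro sum.cong refl) (use n hT hX in auto)
      moreover have "perim n idx h = T 1 + (\<Sum>k=1..m. X k) + T (m+1)"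
        unfolding perim_def m(2)[symmetric] using n hT hX unfolding m_def by simp
      ultimately show "(\<Sum>k=1..m. a k * T k + b k * X k + c k * T (k+1)) = l * (T 1 + (\<Sum>k=1..m. X k) + T (m+1))"
        using H by simp
    qed
  next
    assume "\<forall>T X. (\<Sum>k=1..m. a k * T k + b k * X k + c k * T (k+1)) = l * (T 1 + (\<Sum>k=1..m. X k) + T (m+1))"
    then show "\<forall>h. area_deriv n idx \<omega> h = l * perim n idx h"
      unfolding area_deriv_def perim_def a_def b_def c_def m_def m(2)[unfolded m_def] by blast
  qed
  also have "\<dots> \<longleftrightarrow> a 1 = l \<and> c m = l \<and> (\<forall>k\<in>{1..m}. b k = l) \<and> (\<forall>k\<in>{2..m}. c (k-1) + a k = 0)"
    by (rule linear_form_eq_perimeter_form_iff[OF m(1)])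
  also have "\<dots> \<longleftrightarrow> lagrange_multiplier (tc idx \<omega>) (xc idx \<omega>) (n-2) l"
    unfolding lagrange_multiplier_def a_def b_def c_def m_def
    by (intro conj_cong ball_cong refl) (auto simp: numeral_2_eq_2)
  finally show ?thesis .
qed

end

lemma dim_range_pair_linear:
  fixes P A :: "'a::real_vector \<Rightarrow> real"
  assumes P: "linear P" and A: "linear A" and e: "P e = 1"
  shows "dim (range (\<lambda>h. (P h, A h))) = (if \<exists>l. \<forall>h. A h = l * P h then 1 else 2)"
proof (cases "\<exists>l. \<forall>h. A h = l * P h")
  case True
  then obtain l where l: "\<And>h. A h = l * P h" by blast
  have "range (\<lambda>h. (P h, A h)) = range (\<lambda>c. c *\<^sub>R (1::real, l))"
  proof (intro set_eqI iffI)
    fix v assume "v \<in> range (\<lambda>h. (P h, A h))"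
    then show "v \<in> range (\<lambda>c. c *\<^sub>R (1::real, l))" using l by auto
  next
    fix v assume "v \<in> range (\<lambda>c. c *\<^sub>R (1::real, l))"
    then obtain c where "v = c *\<^sub>R (1, l)" by blast
    then have "v = (P (c *\<^sub>R e), A (c *\<^sub>R e))"
      using linear_scale[OF P] l e by simp
    then show "v \<in> range (\<lambda>h. (P h, A h))" by blast
  qed
  also have "\<dots> = span {(1::real, l)}" by (simp add: span_singleton)
  finally show ?thesis using True by (simp add: dim_span dim_insert zero_prod_def)
next
  case False
  then obtain h where "A h \<noteq> A e * P h" by blast
  then have h: "A h - A e * P h \<noteq> 0" by simp
  have "(a, b) \<in> range (\<lambda>h. (P h, A h))" for a b
  proof
    define \<beta> where "\<beta> = (b - A e * a) / (A h - A e * P h)"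
    define x where "x = (a - \<beta> * P h) *\<^sub>R e + \<beta> *\<^sub>R h"
    have "P x = a"
      unfolding x_def linear_add[OF P] linear_scale[OF P] e by simp
    moreover have "A x = a * A e + \<beta> * (A h - A e * P h)"
      unfolding x_def linear_add[OF A] linear_scale[OF A] by (simp add: algebra_simps)
    then have "A x = b"
      unfolding \<beta>_def using h by simp
    ultimately show "(a, b) = (P x, A x)" by simp
  qed simp
  then have "range (\<lambda>h. (P h, A h)) = UNIV" by auto
  then show ?thesis using False by simp
qed

section \<open>Openness\<close>

lemma continuous_on_tc [continuous_intros]: "continuous_on S (\<lambda>\<omega>. tc idx \<omega> k)"
  unfolding tc_def by (intro continuous_intros)

lemma continuous_on_xc [continuous_intros]: "continuous_on S (\<lambda>\<omega>. xc idx \<omega> k)"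
  unfolding xc_def by (intro continuous_intros)

lemma continuous_on_alpha:
  fixes f1 f2 f3 :: "'a::topological_space \<Rightarrow> real"
  assumes "continuous_on S f1" "continuous_on S f2" "continuous_on S f3"
    and tri: "\<And>w. w \<in> S \<Longrightarrow> inV (f1 w) (f2 w) (f3 w)"
  shows "continuous_on S (\<lambda>w. alpha (f1 w) (f2 w) (f3 w))"
  unfolding alpha_def
proof (rule continuous_on_arccos)
  show "continuous_on S (\<lambda>w. ((f1 w)^2 + (f3 w)^2 - (f2 w)^2) / (2 * f1 w * f3 w))"
    using tri by (intro continuous_intros assms(1-3)) (force simp: inV_def)
  show "\<forall>w\<in>S. - 1 \<le> ((f1 w)^2 + (f3 w)^2 - (f2 w)^2) / (2 * f1 w * f3 w)
      \<and> ((f1 w)^2 + (f3 w)^2 - (f2 w)^2) / (2 * f1 w * f3 w) \<le> 1"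
  proof
    fix w assume "w \<in> S"
    from cos_law_ratio_bounds[OF tri[OF this]]
    show "- 1 \<le> ((f1 w)^2 + (f3 w)^2 - (f2 w)^2) / (2 * f1 w * f3 w)
      \<and> ((f1 w)^2 + (f3 w)^2 - (f2 w)^2) / (2 * f1 w * f3 w) \<le> 1"
      unfolding abs_less_iff by linarith
  qed
qed

lemma open_Omega: "open (Omega n idx)"
proof -
  define U where "U = {\<omega>. (\<forall>i. 0 < \<omega> $ i) \<and> (\<forall>k\<in>{1..n-2}. inV (tc idx \<omega> k) (xc idx \<omega> k) (tc idx \<omega> (k+1)))}"
  define S where "S \<omega> = (\<Sum>k=1..n-2. alpha (tc idx \<omega> k) (xc idx \<omega> k) (tc idx \<omega> (k+1)))" for \<omega>
  have "U = (\<Inter>i. {\<omega>. 0 < \<omega> $ i}) \<inter> (\<Inter>k\<in>{1..n-2}. {\<omega>. inV (tc idx \<omega> k) (xc idx \<omega> k) (tc idx \<omega> (k+1))})"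
    unfolding U_def by auto
  also have "open \<dots>"
    unfolding inV_def
    by (intro open_Int open_INT finite_class.finite_UNIV finite_atLeastAtMost open_halfspace_component_gt_cart
        open_Collect_conj open_Collect_less continuous_intros ballI)
  finally have "open U" .
  moreover have "continuous_on U S"
    unfolding S_def by (intro continuous_on_sum continuous_on_alpha continuous_intros) (auto simp: U_def)
  ultimately have "open (U \<inter> S -` {..<2 * pi})"
    by (intro continuous_open_preimage open_lessThan)
  also have "U \<inter> S -` {..<2 * pi} = Omega n idx"
    unfolding Omega_def U_def S_def by auto
  finally show ?thesis .
qed

lemma continuous_on_dA:
  fixes f1 f2 f3 :: "'a::topological_space \<Rightarrow> real"
  assumes "continuous_on S f1" "continuous_on S f2" "continuous_on S f3"
    and "\<And>w. w \<in> S \<Longrightarrow> 0 < heron (f1 w) (f2 w) (f3 w)"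
  shows "continuous_on S (\<lambda>w. dA_dt (f1 w) (f2 w) (f3 w))"
    and "continuous_on S (\<lambda>w. dA_dx (f1 w) (f2 w) (f3 w))"
    and "continuous_on S (\<lambda>w. dA_ds (f1 w) (f2 w) (f3 w))"
  using assms(4) unfolding dA_dt_def dA_dx_def dA_ds_def heron_def
  by (intro continuous_intros assms(1-3); force)+

lemma open_not_regular:
  assumes n: "3 \<le> n"
  shows "open {\<omega> \<in> Omega n idx. \<not> regular n idx \<omega>}"
proof -
  define a where "a k \<omega> = dA_dt (tc idx \<omega> k) (xc idx \<omega> k) (tc idx \<omega> (k+1))" for k \<omega>
  define b where "b k \<omega> = dA_dx (tc idx \<omega> k) (xc idx \<omega> k) (tc idx \<omega> (k+1))" for k \<omega>
  define c where "c k \<omega> = dA_ds (tc idx \<omega> k) (xc idx \<omega> k) (tc idx \<omega> (k+1))" for k \<omega>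
  define F where "F \<omega> = (c (n-2) \<omega> - a 1 \<omega>)^2 + (\<Sum>k=1..n-2. (b k \<omega> - a 1 \<omega>)^2)
    + (\<Sum>k=2..n-2. (c (k-1) \<omega> + a k \<omega>)^2)" for \<omega>
  have "regular n idx \<omega> \<longleftrightarrow> F \<omega> = 0" if \<omega>: "\<omega> \<in> Omega n idx" for \<omega>
  proof -
    have "regular n idx \<omega> \<longleftrightarrow> lagrange_multiplier (tc idx \<omega>) (xc idx \<omega>) (n-2) (a 1 \<omega>)"
      unfolding regular_iff_lagrange_multiplier[OF n \<omega>] lagrange_multiplier_def a_def
      by (auto simp: numeral_2_eq_2)
    also have "\<dots> \<longleftrightarrow> c (n-2) \<omega> = a 1 \<omega> \<and> (\<forall>k\<in>{1..n-2}. b k \<omega> = a 1 \<omega>)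
        \<and> (\<forall>k\<in>{2..n-2}. c (k-1) \<omega> + a k \<omega> = 0)"
    proof -
      have "k - 1 + 1 = k" if "k \<in> {2..n-2}" for k using that by simp
      then show ?thesis
        unfolding lagrange_multiplier_def a_def b_def c_def by (auto simp: numeral_2_eq_2)
    qed
    also have "\<dots> \<longleftrightarrow> F \<omega> = 0"
      unfolding F_def by (simp add: add_nonneg_eq_0_iff sum_nonneg sum_nonneg_eq_0_iff)
    finally show ?thesis .
  qed
  then have "{\<omega> \<in> Omega n idx. \<not> regular n idx \<omega>} = Omega n idx \<inter> F -` (- {0})"
    by auto
  moreover have "continuous_on (Omega n idx) F"
  proof -
    have partials: "continuous_on (Omega n idx) (a k)" "continuous_on (Omega n idx) (b k)"
      "continuous_on (Omega n idx) (c k)" if "k \<in> {1..n-2}" for k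
      unfolding a_def b_def c_def
      by (intro continuous_on_dA continuous_intros Omega_heron_pos[OF _ that]; assumption)+
    show ?thesis unfolding F_def
      by (intro continuous_intros partials) (use n in auto)
  qed
  ultimately show ?thesis
    by (simp add: continuous_open_preimage open_Omega open_Compl)
qed

context
  fixes n :: nat and idx :: "nat \<Rightarrow> 'd::finite"
  assumes n: "3 \<le> n" and bij: "bij_betw idx {..<2*n-3} (UNIV :: 'd set)"
begin

lemma perim_eq_1_exists: obtains e where "perim n idx e = 1"
proof -
  obtain e where eT: "\<And>k. k \<in> {1..n-1} \<Longrightarrow> tc idx e k = of_bool (k = 1)"
    and eX: "\<And>k. k \<in> {1..n-2} \<Longrightarrow> xc idx e k = 0"
    using coordinates_exist[OF bij, where T = "\<lambda>k. of_bool (k = 1)" and X = "\<lambda>_. 0"] by blast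
  have "(\<Sum>k=1..n-2. xc idx e k) = 0" by (rule sum.neutral) (use eX in blast)
  then have "perim n idx e = 1" unfolding perim_def using eT[of 1] eT[of "n-1"] n by simp
  then show ?thesis by (rule that)
qed

lemma submersion_perim: "submersion_on (perim n idx) (Omega n idx)"
proof -
  obtain e where e: "perim n idx e = 1" by (rule perim_eq_1_exists)
  have "perim n idx (y *\<^sub>R e) = y" for y
    using linear_scale[OF bounded_linear.linear[OF bounded_linear_perim[of n idx]]] e by simp
  then have "surj (perim n idx)" by (rule surjI)
  then show ?thesis
    unfolding submersion_on_def
    using bounded_linear_imp_has_derivative[OF bounded_linear_perim[of n idx]] by blast
qed

lemma rank_derivative_Psi:
  assumes \<omega>: "\<omega> \<in> Omega n idx"
  shows "\<exists>D. (Psi n idx has_derivative D) (at \<omega>) \<and> dim (range D) = (if regular n idx \<omega> then 1 else 2)"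
proof -
  obtain e where e: "perim n idx e = 1" by (rule perim_eq_1_exists)
  let ?D = "\<lambda>h. (perim n idx h, area_deriv n idx \<omega> h)"
  have "(Psi n idx has_derivative ?D) (at \<omega>)"
    unfolding Psi_def[abs_def]
    by (intro has_derivative_Pair bounded_linear_imp_has_derivative bounded_linear_perim has_derivative_area \<omega>)
  moreover have "regular n idx \<omega> \<longleftrightarrow> (\<exists>l. \<forall>h. area_deriv n idx \<omega> h = l * perim n idx h)"
    unfolding regular_iff_lagrange_multiplier[OF n \<omega>]
    by (intro ex_cong1) (rule area_deriv_proportional_iff[OF n bij \<omega>, symmetric])
  then have "dim (range ?D) = (if regular n idx \<omega> then 1 else 2)"
    using dim_range_pair_linear[OF bounded_linear.linear[OF bounded_linear_perim]
      bounded_linear.linear[OF has_derivative_bounded_linear[OF has_derivative_area[OF \<omega>]]] e]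
    by presburger
  ultimately show ?thesis by blast
qed

end

lemma submersion_area:
  assumes "3 \<le> n"
  shows "submersion_on (area n idx) (Omega n idx)"
  unfolding submersion_on_def
proof
  fix \<omega> assume \<omega>: "\<omega> \<in> Omega n idx"
  have lin: "linear (area_deriv n idx \<omega>)"
    using has_derivative_area[OF \<omega>] by (rule has_derivative_linear)
  have pos: "0 < area_deriv n idx \<omega> \<omega>"
    using area_deriv_self[OF \<omega>] area_pos[OF assms \<omega>] by simp
  have "area_deriv n idx \<omega> ((y / area_deriv n idx \<omega> \<omega>) *\<^sub>R \<omega>) = y" for y
    using linear_scale[OF lin] pos by simp
  then have "surj (area_deriv n idx \<omega>)" by (rule surjI)
  then show "\<exists>D. (area n idx has_derivative D) (at \<omega>) \<and> surj D"
    using has_derivative_area[OF \<omega>] by blast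
qed

theorem theorem3p2:
  fixes n :: nat and idx :: "nat \<Rightarrow> 'd::finite"
  assumes "n \<ge> 3"
    and "bij_betw idx {..<2*n-3} (UNIV :: 'd set)"
  shows "open (Omega n idx)
    \<and> submersion_on (perim n idx) (Omega n idx)
    \<and> submersion_on (area n idx) (Omega n idx)
    \<and> (\<forall>\<omega>\<in>Omega n idx. \<exists>D. (Psi n idx has_derivative D) (at \<omega>)
          \<and> dim (range D) = (if regular n idx \<omega> then 1 else 2))
    \<and> open {\<omega>\<in>Omega n idx. \<not> regular n idx \<omega>}"
proof (intro conjI ballI)
  show "open (Omega n idx)" by (rule open_Omega)
  show "submersion_on (perim n idx) (Omega n idx)" using assms by (rule submersion_perim)
  show "submersion_on (area n idx) (Omega n idx)" using assms(1) by (rule submersion_area)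
  show "\<exists>D. (Psi n idx has_derivative D) (at \<omega>) \<and> dim (range D) = (if regular n idx \<omega> then 1 else 2)"
    if "\<omega> \<in> Omega n idx" for \<omega>
    using assms that by (rule rank_derivative_Psi)
  show "open {\<omega> \<in> Omega n idx. \<not> regular n idx \<omega>}" using assms(1) by (rule open_not_regular)
qed

end
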